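(* Let $r>1$, $q\in(0,1)$ and $p=1-q$. Then: (i) for all integers $k\ge1$, $\displaystyle\sum_{j=1}^{\infty}\frac{(r+k)\cdots(r+j+k-1)}{k(k+1)\cdots(j+k-1)}q^j\le p^{-(r+1)}-1$; (ii) for all integers $k\ge1$, $\displaystyle\sum_{j=1}^{\infty}\frac{(r+k)\cdots(r+j+k-1)}{(k+1)\cdots(j+k)}q^j\le\frac{p^{-r}-1}{rq}-1$; (iii) for all integers $k\ge1$, $\displaystyle\sum_{j=2}^{\infty}\frac{(r+k+1)\cdots(r+j+k-1)}{(k+1)\cdots(j+k-1)}q^j\le\frac{p^{-(r+1)}-1}{r}-q$; (iv) for all integers $k\ge2$, $\displaystyle\sum_{j=1}^{\infty}\frac{(r+k+1)\cdots(r+j+k)}{k(k+1)\cdots(j+k-1)}q^j\le\frac{p^{-(r+2)}-1}{(r+1)q}-1$; (v) for all integers $k\ge2$, $\displaystyle\sum_{j=1}^{\infty}\frac{(r+k)\cdots(r+j+k-1)}{k(k+1)\cdots(j+k)}q^j\le\frac{p^{-r}-1}{r(r+1)q^2}-\frac12$.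
   Context: In each product $(a)\cdots(b)$ the factors increase by $1$ from $a$ to $b$; e.g. $(r+k)\cdots(r+j+k-1)$ has $j$ factors and $k(k+1)\cdots(j+k-1)$ has $j$ factors. *)

theory Defs
  imports Complex_Main
begin

end

theory Submission
  imports Defs "HOL-Analysis.Generalised_Binomial_Theorem"
begin

(* For x >= y > 0 the ratio of rising factorials x^(n) / y^(n) only decreases when x and y are
   shifted up by the same amount, so each series is dominated termwise by its instance at the
   least admissible k.  Since s^(m+n) / (m+n)! = s^(m) / m! * (s+m)^(n) / (m+1)^(n), that dominating
   series is a multiple of a tail of the binomial series (1 - q) powr (-s) = \<Sum>n. s^(n) / n! * q^n,
   whose sum is explicit. *)

lemma binomial_series_pochhammer:
  fixes q s :: real
  assumes "\<bar>q\<bar> < 1"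
  shows "(\<lambda>n. pochhammer s n / fact n * q ^ n) sums ((1 - q) powr (-s))"
proof -
  have "((-s) gchoose n) * (-q) ^ n = pochhammer s n / fact n * q ^ n" for n
  proof -
    have "((-s) gchoose n) * (-q) ^ n = ((-1) ^ n * (-1) ^ n) * (pochhammer s n / fact n * q ^ n)"
      by (simp add: gbinomial_pochhammer power_minus[of q])
    also have "(-1 :: real) ^ n * (-1) ^ n = 1"
      by (simp flip: power_mult_distrib)
    finally show ?thesis by simp
  qed
  then show ?thesis
    using gen_binomial_real[of "-q" "-s"] assms by simp
qed

lemma binomial_term_add:
  fixes q s :: real
  shows "pochhammer s (m + n) / fact (m + n) * q ^ (m + n)
    = pochhammer s m / fact m * q ^ m * (pochhammer (s + m) n / pochhammer (real m + 1) n * q ^ n)"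
  by (simp add: pochhammer_product' pochhammer_fact[of "m+n"] pochhammer_fact[of m] power_add add.commute)

lemma pochhammer_ratio_series_sums:
  fixes q s :: real
  assumes "\<bar>q\<bar> < 1" "q \<noteq> 0" "pochhammer s m \<noteq> 0"
  shows "(\<lambda>j. pochhammer (s + m) (j + 1) / pochhammer (real m + 1) (j + 1) * q ^ (j + 1))
    sums (((1 - q) powr (-s) - (\<Sum>i<m. pochhammer s i / fact i * q ^ i))
          / (pochhammer s m / fact m * q ^ m) - 1)"
proof -
  let ?B = "\<lambda>n. pochhammer s n / fact n * q ^ n"
  let ?T = "\<lambda>n. pochhammer (s + m) n / pochhammer (real m + 1) n * q ^ n"
  have "?B sums ((1 - q) powr (-s))"
    by (rule binomial_series_pochhammer[OF assms(1)])
  then have "(\<lambda>n. ?B (n + m)) sums ((1 - q) powr (-s) - sum ?B {..<m})"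
    using sums_iff_shift[of ?B m "(1 - q) powr (-s) - sum ?B {..<m}"] by simp
  then have "(\<lambda>n. ?B (n + m) / ?B m) sums (((1 - q) powr (-s) - sum ?B {..<m}) / ?B m)"
    by (rule sums_divide)
  moreover have "?B (n + m) / ?B m = ?T n" for n
    using binomial_term_add[of s m n q] assms(2,3) by (simp add: add.commute)
  ultimately have "?T sums (((1 - q) powr (-s) - sum ?B {..<m}) / ?B m)"
    by simp
  then show ?thesis
    using sums_Suc_iff[of ?T "((1 - q) powr (-s) - sum ?B {..<m}) / ?B m - 1"] by simp
qed

lemma summable_suminf_le_by_majorant:
  fixes f g :: "nat \<Rightarrow> real"
  assumes "\<And>j. 0 \<le> f j" "\<And>j. f j \<le> g j" "g sums G" "G \<le> X"
  shows "summable f \<and> suminf f \<le> X"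
proof -
  have "summable f"
    by (rule summable_comparison_test[OF _ sums_summable[OF assms(3)]]) (use assms(1,2) in auto)
  moreover have "suminf f \<le> G"
    using assms(1-3) \<open>summable f\<close> by (metis sums_summable sums_unique suminf_le)
  ultimately show ?thesis
    using assms(4) by simp
qed

lemma pochhammer_ratio_antimono:
  fixes x y x' y' :: real
  assumes "0 < y" "y \<le> y'" "y \<le> x" "x' - y' = x - y"
  shows "pochhammer x' n / pochhammer y' n \<le> pochhammer x n / pochhammer y n"
proof (induction n)
  case 0
  then show ?case by simp
next
  case (Suc n)
  have positive: "0 < x" "0 < y" "0 < x'" "0 < y'"
    using assms by linarith+
  have factor: "(x' + n) / (y' + n) \<le> (x + n) / (y + n)"
  proof -
    have "(x' + n) / (y' + n) = 1 + (x - y) / (y' + n)"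
      using assms by (simp add: field_simps)
    also have "\<dots> \<le> 1 + (x - y) / (y + n)"
      using assms by (intro add_left_mono divide_left_mono) auto
    also have "\<dots> = (x + n) / (y + n)"
      using assms by (simp add: field_simps)
    finally show ?thesis .
  qed
  have "pochhammer x' (Suc n) / pochhammer y' (Suc n)
      = pochhammer x' n / pochhammer y' n * ((x' + n) / (y' + n))"
    by (simp add: pochhammer_Suc)
  also have "\<dots> \<le> pochhammer x n / pochhammer y n * ((x + n) / (y + n))"
    using Suc.IH factor positive by (intro mult_mono) (simp_all add: pochhammer_pos less_imp_le)
  also have "\<dots> = pochhammer x (Suc n) / pochhammer y (Suc n)"
    by (simp add: pochhammer_Suc)
  finally show ?case .
qed

lemma one_le_powr_uminus:
  fixes x a :: real
  assumes "0 < x" "x \<le> 1" "0 \<le> a"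
  shows "1 \<le> x powr (-a)"
  using assms by (simp add: powr_minus_divide powr_le1)

lemma pochhammer_ratio_nonneg:
  fixes a b :: real
  assumes "0 < a" "0 < b"
  shows "0 \<le> pochhammer a n / pochhammer b m"
  using assms by (simp add: pochhammer_pos less_imp_le)

lemma pochhammer_series_bound_1:
  fixes r q :: real and k :: nat
  assumes "r > 1" "0 < q" "q < 1" "k \<ge> 1"
  shows "summable (\<lambda>j. pochhammer (r + real k) (j+1) / pochhammer (real k) (j+1) * q ^ (j+1))
    \<and> suminf (\<lambda>j. pochhammer (r + real k) (j+1) / pochhammer (real k) (j+1) * q ^ (j+1))
        \<le> (1 - q) powr (-(r+1)) - 1"
proof (rule summable_suminf_le_by_majorant)
  show "(\<lambda>j. pochhammer (r + 1) (j+1) / pochhammer 1 (j+1) * q ^ (j+1))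
      sums ((1 - q) powr (-(r+1)) - 1)"
    using pochhammer_ratio_series_sums[of q "r + 1" 0] assms by simp
  fix j
  show "0 \<le> pochhammer (r + real k) (j+1) / pochhammer (real k) (j+1) * q ^ (j+1)"
    using assms by (intro mult_nonneg_nonneg pochhammer_ratio_nonneg) auto
  have "pochhammer (r + real k) (j+1) / pochhammer (real k) (j+1)
      \<le> pochhammer (r + 1) (j+1) / pochhammer 1 (j+1)"
    using assms by (intro pochhammer_ratio_antimono) auto
  then show "pochhammer (r + real k) (j+1) / pochhammer (real k) (j+1) * q ^ (j+1)
      \<le> pochhammer (r + 1) (j+1) / pochhammer 1 (j+1) * q ^ (j+1)"
    by (rule mult_right_mono) (use assms in simp)
qed simp

lemma pochhammer_series_bound_2:
  fixes r q :: real and k :: nat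
  assumes "r > 1" "0 < q" "q < 1" "k \<ge> 1"
  shows "summable (\<lambda>j. pochhammer (r + real k) (j+1) / pochhammer (real k + 1) (j+1) * q ^ (j+1))
    \<and> suminf (\<lambda>j. pochhammer (r + real k) (j+1) / pochhammer (real k + 1) (j+1) * q ^ (j+1))
        \<le> ((1 - q) powr (-r) - 1) / (r * q) - 1"
proof (rule summable_suminf_le_by_majorant)
  show "(\<lambda>j. pochhammer (r + 1) (j+1) / pochhammer 2 (j+1) * q ^ (j+1))
      sums (((1 - q) powr (-r) - 1) / (r * q) - 1)"
    using pochhammer_ratio_series_sums[of q r 1] assms by simp
  fix j
  show "0 \<le> pochhammer (r + real k) (j+1) / pochhammer (real k + 1) (j+1) * q ^ (j+1)"
    using assms by (intro mult_nonneg_nonneg pochhammer_ratio_nonneg) auto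
  have "pochhammer (r + real k) (j+1) / pochhammer (real k + 1) (j+1)
      \<le> pochhammer (r + 1) (j+1) / pochhammer 2 (j+1)"
    using assms by (intro pochhammer_ratio_antimono) auto
  then show "pochhammer (r + real k) (j+1) / pochhammer (real k + 1) (j+1) * q ^ (j+1)
      \<le> pochhammer (r + 1) (j+1) / pochhammer 2 (j+1) * q ^ (j+1)"
    by (rule mult_right_mono) (use assms in simp)
qed simp

lemma pochhammer_series_bound_3:
  fixes r q :: real and k :: nat
  assumes "r > 1" "0 < q" "q < 1" "k \<ge> 1"
  shows "summable (\<lambda>j. pochhammer (r + real k + 1) (j+1) / pochhammer (real k + 1) (j+1) * q ^ (j+2))
    \<and> suminf (\<lambda>j. pochhammer (r + real k + 1) (j+1) / pochhammer (real k + 1) (j+1) * q ^ (j+2))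
        \<le> ((1 - q) powr (-(r+1)) - 1) / r - q"
proof (rule summable_suminf_le_by_majorant)
  show "(\<lambda>j. q * (pochhammer (r + 2) (j+1) / pochhammer 2 (j+1) * q ^ (j+1)))
      sums (q * (((1 - q) powr (-(r+1)) - 1) / ((r + 1) * q) - 1))"
    using pochhammer_ratio_series_sums[of q "r + 1" 1] assms by (intro sums_mult) (simp add: add.assoc)
  let ?P = "(1 - q) powr (-(r+1))"
  have "(r + 1) * q \<noteq> 0"
    using assms by simp
  then have "q * ((?P - 1) / ((r + 1) * q) - 1) = (?P - 1) / (r + 1) - q"
    by (simp add: divide_simps)
  also have "\<dots> \<le> (?P - 1) / r - q"
    using assms one_le_powr_uminus[of "1 - q" "r + 1"] by (simp add: divide_left_mono)
  finally show "q * ((?P - 1) / ((r + 1) * q) - 1) \<le> (?P - 1) / r - q" .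
  fix j
  show "0 \<le> pochhammer (r + real k + 1) (j+1) / pochhammer (real k + 1) (j+1) * q ^ (j+2)"
    using assms by (intro mult_nonneg_nonneg pochhammer_ratio_nonneg) auto
  have "pochhammer (r + real k + 1) (j+1) / pochhammer (real k + 1) (j+1)
      \<le> pochhammer (r + 2) (j+1) / pochhammer 2 (j+1)"
    using assms by (intro pochhammer_ratio_antimono) auto
  then have "q * (pochhammer (r + real k + 1) (j+1) / pochhammer (real k + 1) (j+1) * q ^ (j+1))
      \<le> q * (pochhammer (r + 2) (j+1) / pochhammer 2 (j+1) * q ^ (j+1))"
    using assms by (intro mult_left_mono mult_right_mono) auto
  then show "pochhammer (r + real k + 1) (j+1) / pochhammer (real k + 1) (j+1) * q ^ (j+2)
      \<le> q * (pochhammer (r + 2) (j+1) / pochhammer 2 (j+1) * q ^ (j+1))"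
    by (simp add: mult_ac)
qed

lemma pochhammer_series_bound_4:
  fixes r q :: real and k :: nat
  assumes "r > 1" "0 < q" "q < 1" "k \<ge> 2"
  shows "summable (\<lambda>j. pochhammer (r + real k + 1) (j+1) / pochhammer (real k) (j+1) * q ^ (j+1))
    \<and> suminf (\<lambda>j. pochhammer (r + real k + 1) (j+1) / pochhammer (real k) (j+1) * q ^ (j+1))
        \<le> ((1 - q) powr (-(r+2)) - 1) / ((r+1) * q) - 1"
proof (rule summable_suminf_le_by_majorant)
  show "(\<lambda>j. pochhammer (r + 3) (j+1) / pochhammer 2 (j+1) * q ^ (j+1))
      sums (((1 - q) powr (-(r+2)) - 1) / ((r + 2) * q) - 1)"
    using pochhammer_ratio_series_sums[of q "r + 2" 1] assms by (simp add: add.assoc)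
  have "1 \<le> (1 - q) powr (-(r+2))"
    using assms by (intro one_le_powr_uminus) auto
  then show "((1 - q) powr (-(r+2)) - 1) / ((r + 2) * q) - 1 \<le> ((1 - q) powr (-(r+2)) - 1) / ((r+1) * q) - 1"
    using assms by (simp add: divide_left_mono)
  fix j
  show "0 \<le> pochhammer (r + real k + 1) (j+1) / pochhammer (real k) (j+1) * q ^ (j+1)"
    using assms by (intro mult_nonneg_nonneg pochhammer_ratio_nonneg) auto
  have "pochhammer (r + real k + 1) (j+1) / pochhammer (real k) (j+1)
      \<le> pochhammer (r + 3) (j+1) / pochhammer 2 (j+1)"
    using assms by (intro pochhammer_ratio_antimono) auto
  then show "pochhammer (r + real k + 1) (j+1) / pochhammer (real k) (j+1) * q ^ (j+1)
      \<le> pochhammer (r + 3) (j+1) / pochhammer 2 (j+1) * q ^ (j+1)"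
    by (rule mult_right_mono) (use assms in simp)
qed

lemma pochhammer_series_bound_5:
  fixes r q :: real and k :: nat
  assumes "r > 1" "0 < q" "q < 1" "k \<ge> 2"
  shows "summable (\<lambda>j. pochhammer (r + real k) (j+1) / pochhammer (real k) (j+2) * q ^ (j+1))
    \<and> suminf (\<lambda>j. pochhammer (r + real k) (j+1) / pochhammer (real k) (j+2) * q ^ (j+1))
        \<le> ((1 - q) powr (-r) - 1) / (r * (r+1) * q^2) - 1/2"
proof (rule summable_suminf_le_by_majorant)
  show "(\<lambda>j. 1/2 * (pochhammer (r + 2) (j+1) / pochhammer 3 (j+1) * q ^ (j+1)))
      sums (1/2 * (((1 - q) powr (-r) - (1 + r * q)) / (r * (r + 1) / 2 * q^2) - 1))"
  proof (rule sums_mult)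
    have "pochhammer r 2 = r * (r + 1)" "(\<Sum>i<2. pochhammer r i / fact i * q ^ i) = 1 + r * q"
      by (simp_all add: numeral_2_eq_2 pochhammer_Suc)
    then show "(\<lambda>j. pochhammer (r + 2) (j+1) / pochhammer 3 (j+1) * q ^ (j+1))
        sums (((1 - q) powr (-r) - (1 + r * q)) / (r * (r + 1) / 2 * q^2) - 1)"
      using pochhammer_ratio_series_sums[of q r 2] assms by (simp add: mult.commute)
  qed
  let ?P = "(1 - q) powr (-r)"
  have "1/2 * ((?P - (1 + r * q)) / (r * (r + 1) / 2 * q^2) - 1)
      = (?P - 1) / (r * (r+1) * q^2) - 1/2 - 1 / ((r + 1) * q)"
  proof -
    have "r * (r + 1) * q^2 \<noteq> 0" "(r + 1) * q \<noteq> 0"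
      using assms by auto
    then show ?thesis
      by (simp add: divide_simps) (simp add: algebra_simps power2_eq_square)
  qed
  moreover have "0 \<le> 1 / ((r + 1) * q)"
    using assms by simp
  ultimately show "1/2 * ((?P - (1 + r * q)) / (r * (r + 1) / 2 * q^2) - 1)
      \<le> (?P - 1) / (r * (r+1) * q^2) - 1/2"
    by linarith
  fix j
  show "0 \<le> pochhammer (r + real k) (j+1) / pochhammer (real k) (j+2) * q ^ (j+1)"
    using assms by (intro mult_nonneg_nonneg pochhammer_ratio_nonneg) auto
  \<comment> \<open>Splitting off the factor k leaves the denominator (k+1)^(j+1), matching the tail from index 2.\<close>
  have "pochhammer (r + real k) (j+1) / pochhammer (real k) (j+2) * q ^ (j+1)
      = 1 / real k * (pochhammer (r + real k) (j+1) / pochhammer (real k + 1) (j+1) * q ^ (j+1))"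
    using pochhammer_rec[of "real k" "Suc j"] by (simp del: pochhammer_Suc)
  also have "\<dots> \<le> 1/2 * (pochhammer (r + 2) (j+1) / pochhammer 3 (j+1) * q ^ (j+1))"
  proof -
    have "pochhammer (r + real k) (j+1) / pochhammer (real k + 1) (j+1)
        \<le> pochhammer (r + 2) (j+1) / pochhammer 3 (j+1)"
      using assms by (intro pochhammer_ratio_antimono) auto
    then show ?thesis
      using assms by (intro mult_mono mult_nonneg_nonneg pochhammer_ratio_nonneg) auto
  qed
  finally show "pochhammer (r + real k) (j+1) / pochhammer (real k) (j+2) * q ^ (j+1)
      \<le> 1/2 * (pochhammer (r + 2) (j+1) / pochhammer 3 (j+1) * q ^ (j+1))" .
qed

theorem lemmaA2:
  fixes r q p :: real
  assumes "r > 1" and "0 < q" and "q < 1" and "p = 1 - q"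
  shows
   "(\<forall>k::nat. k \<ge> 1 \<longrightarrow>
      (let f = (\<lambda>j::nat. pochhammer (r + real k) (j+1) / pochhammer (real k) (j+1) * q ^ (j+1))
       in summable f \<and> suminf f \<le> p powr (-(r+1)) - 1))
  \<and> (\<forall>k::nat. k \<ge> 1 \<longrightarrow>
      (let f = (\<lambda>j::nat. pochhammer (r + real k) (j+1) / pochhammer (real k + 1) (j+1) * q ^ (j+1))
       in summable f \<and> suminf f \<le> (p powr (-r) - 1) / (r * q) - 1))
  \<and> (\<forall>k::nat. k \<ge> 1 \<longrightarrow>
      (let f = (\<lambda>j::nat. pochhammer (r + real k + 1) (j+1) / pochhammer (real k + 1) (j+1) * q ^ (j+2))
       in summable f \<and> suminf f \<le> (p powr (-(r+1)) - 1) / r - q))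
  \<and> (\<forall>k::nat. k \<ge> 2 \<longrightarrow>
      (let f = (\<lambda>j::nat. pochhammer (r + real k + 1) (j+1) / pochhammer (real k) (j+1) * q ^ (j+1))
       in summable f \<and> suminf f \<le> (p powr (-(r+2)) - 1) / ((r+1) * q) - 1))
  \<and> (\<forall>k::nat. k \<ge> 2 \<longrightarrow>
      (let f = (\<lambda>j::nat. pochhammer (r + real k) (j+1) / pochhammer (real k) (j+2) * q ^ (j+1))
       in summable f \<and> suminf f \<le> (p powr (-r) - 1) / (r * (r+1) * q^2) - 1/2))"
  using pochhammer_series_bound_1[OF assms(1-3)] pochhammer_series_bound_2[OF assms(1-3)]
    pochhammer_series_bound_3[OF assms(1-3)] pochhammer_series_bound_4[OF assms(1-3)]
    pochhammer_series_bound_5[OF assms(1-3)]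
  unfolding Let_def assms(4) by blast

end
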